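(* Let $\theta\in\mathbb{R}$ with $\omega_0:=\cos\theta\neq 0$, and put $\gamma=\sin\theta$. Let $|u_1\rangle=\tfrac{1}{\sqrt2}\begin{pmatrix}1\\1\end{pmatrix}$, $|u_2\rangle=\tfrac{1}{\sqrt2}\begin{pmatrix}1\\-1\end{pmatrix}$, let $T=\cos\tfrac{\theta}{2}\,\mathbf 1_2-2\sin\tfrac{\theta}{2}\,\sigma_2$, and let $|\phi_j\rangle=\omega_0T|u_j\rangle$, $|\chi_j\rangle=(T^{-1})^{\dagger}|u_j\rangle$. For $m=1,2,3$ define the $2\times2$ matrices $$\sigma_m^{\gamma}=\frac{i^{m+1}}{2}\sum_{j,k=1}^{2}\frac{c^{(m)}_{jk}}{\omega_0^{\delta_{m2}}}\,|\phi_j\rangle\langle\chi_k|.$$ Then for all $l,m\in\{1,2,3\}$, $$[\sigma_l^{\gamma},\sigma_m^{\gamma}]=i\sum_{n=1}^{3}\epsilon_{lmn}\,(1-\gamma^2\delta_{n2})\,\sigma_n^{\gamma}.$$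
   Context: Here $\langle\chi_k|$ is the conjugate transpose of $|\chi_k\rangle$, $\dagger$ is conjugate transpose, $\sigma_2=\tfrac12\begin{pmatrix}0&-i\\ i&0\end{pmatrix}$, $\epsilon_{lmn}$ is the Levi-Civita symbol and $\delta$ the Kronecker delta. The coefficient matrices are $c^{(m)}=(c^{(m)}_{jk})_{j,k=1,2}$ with $c^{(1)}_{jk}=(-1)^j\delta_{jk}$, $c^{(3)}_{jk}=1-(-1)^jc^{(1)}_{jk}$ and $c^{(2)}_{jk}=(-1)^jc^{(3)}_{jk}$, i.e. $c^{(1)}=\begin{pmatrix}-1&0\\0&1\end{pmatrix}$, $c^{(2)}=\begin{pmatrix}0&-1\\1&0\end{pmatrix}$, $c^{(3)}=\begin{pmatrix}0&1\\1&0\end{pmatrix}$. *)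

theory Defs
  imports "HOL-Analysis.Analysis"
begin

(* 2x2 complex matrices are complex^2^2, vectors complex^2; entries listed with vector [..]
   so that vector index 1 is the first component and 2 the second. *)

definition cmat_scale :: "complex \<Rightarrow> complex^2^2 \<Rightarrow> complex^2^2" where
  "cmat_scale c A = (\<chi> i j. c * A $ i $ j)"

definition conj_transpose :: "complex^2^2 \<Rightarrow> complex^2^2" where
  "conj_transpose A = (\<chi> i j. cnj (A $ j $ i))"

definition ket_bra :: "complex^2 \<Rightarrow> complex^2 \<Rightarrow> complex^2^2" where
  "ket_bra x y = (\<chi> i j. x $ i * cnj (y $ j))"

definition commutator :: "complex^2^2 \<Rightarrow> complex^2^2 \<Rightarrow> complex^2^2" where
  "commutator A B = A ** B - B ** A"

definition kdelta :: "nat \<Rightarrow> nat \<Rightarrow> complex" where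
  "kdelta a b = (if a = b then 1 else 0)"

definition levi_civita :: "nat \<Rightarrow> nat \<Rightarrow> nat \<Rightarrow> complex" where
  "levi_civita l m n =
     (if (l,m,n) \<in> {(1,2,3),(2,3,1),(3,1,2)} then 1
      else if (l,m,n) \<in> {(1,3,2),(3,2,1),(2,1,3)} then -1 else 0)"

definition sigma2 :: "complex^2^2" where
  "sigma2 = cmat_scale (1/2) (vector [vector [0, -\<i>], vector [\<i>, 0]])"

definition c1 :: "nat \<Rightarrow> nat \<Rightarrow> complex" where
  "c1 j k = (-1) ^ j * kdelta j k"
definition c3 :: "nat \<Rightarrow> nat \<Rightarrow> complex" where
  "c3 j k = 1 - (-1) ^ j * c1 j k"
definition c2 :: "nat \<Rightarrow> nat \<Rightarrow> complex" where
  "c2 j k = (-1) ^ j * c3 j k"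
definition coef :: "nat \<Rightarrow> nat \<Rightarrow> nat \<Rightarrow> complex" where
  "coef m j k = (if m = 1 then c1 j k else if m = 2 then c2 j k else c3 j k)"

definition u_vec :: "nat \<Rightarrow> complex^2" where
  "u_vec j = (if j = 1 then vector [complex_of_real (1 / sqrt 2), complex_of_real (1 / sqrt 2)]
              else vector [complex_of_real (1 / sqrt 2), - complex_of_real (1 / sqrt 2)])"

definition T_mat :: "real \<Rightarrow> complex^2^2" where
  "T_mat \<theta> = cmat_scale (complex_of_real (cos (\<theta>/2))) (mat 1)
              - cmat_scale (complex_of_real (2 * sin (\<theta>/2))) sigma2"

definition phi_vec :: "real \<Rightarrow> nat \<Rightarrow> complex^2" where
  "phi_vec \<theta> j = complex_of_real (cos \<theta>) *s (T_mat \<theta> *v u_vec j)"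

definition chi_vec :: "real \<Rightarrow> nat \<Rightarrow> complex^2" where
  "chi_vec \<theta> j = conj_transpose (matrix_inv (T_mat \<theta>)) *v u_vec j"

definition sigma_gamma :: "real \<Rightarrow> nat \<Rightarrow> complex^2^2" where
  "sigma_gamma \<theta> m =
     cmat_scale (\<i> ^ (m + 1) / 2)
       (\<Sum>j\<in>{1,2::nat}. \<Sum>k\<in>{1,2::nat}.
          cmat_scale (coef m j k / complex_of_real (cos \<theta>) ^ (if m = 2 then 1 else 0))
            (ket_bra (phi_vec \<theta> j) (chi_vec \<theta> k)))"

end

theory Submission
  imports Defs
begin

(* Let P_m = sum_jk c^(m)_jk |u_j><u_k|. Since <chi_k| = <u_k| T^-1, the defining sum of
   sigma_m^gamma is a multiple of T P_m T^-1. In the orthonormal basis u_1, u_2 the coefficient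
   matrices give P_1 = -sigma_x, P_2 = i sigma_y, P_3 = sigma_z, whence
     sigma_1^gamma = (omega_0/2) T sigma_x T^-1,   sigma_2^gamma = (1/2) T sigma_y T^-1,
     sigma_3^gamma = (omega_0/2) T sigma_z T^-1,
   and T is invertible because det T = omega_0. Conjugation by T preserves commutators, so the
   relations reduce to [sigma_x, sigma_y] = 2i sigma_z and its cyclic versions; the factor
   omega_0^2 = 1 - gamma^2 survives only in [sigma_3^gamma, sigma_1^gamma]. *)

lemma matrix_inv_left:
  fixes A :: "'a::semiring_1^'n^'m"
  assumes "invertible A"
  shows "matrix_inv A ** A = mat 1"
  using someI_ex[OF assms[unfolded invertible_def]] unfolding matrix_inv_def by blast

lemma matrix_mul_diff_left: "(A - B) ** C = A ** C - B ** C"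
  for C :: "'a::comm_ring_1^'n^'m"
  by (simp add: vec_eq_iff matrix_matrix_mult_def left_diff_distrib sum_subtractf)

lemma matrix_mul_diff_right: "A ** (B - C) = A ** B - A ** C"
  for A :: "'a::comm_ring_1^'n^'m"
  by (simp add: vec_eq_iff matrix_matrix_mult_def right_diff_distrib sum_subtractf)

lemma matrix_mul_sum_left: "sum f I ** B = (\<Sum>i\<in>I. f i ** B)"
  for B :: "'a::comm_semiring_1^'n^'m"
  by (simp add: vec_eq_iff matrix_matrix_mult_def sum_component sum_distrib_right sum.swap[of _ I])

lemma matrix_mul_sum_right: "A ** sum f I = (\<Sum>i\<in>I. A ** f i)"
  for A :: "'a::comm_semiring_1^'n^'m"
  by (simp add: vec_eq_iff matrix_matrix_mult_def sum_component sum_distrib_left sum.swap[of _ I])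

lemma cmat_scale_zero: "cmat_scale 0 A = 0" "cmat_scale c 0 = 0"
  by (simp_all add: cmat_scale_def vec_eq_iff)

lemma cmat_scale_uminus: "- cmat_scale c A = cmat_scale (- c) A" "cmat_scale c (- A) = cmat_scale (- c) A"
  by (simp_all add: cmat_scale_def vec_eq_iff)

lemma cmat_scale_scale: "cmat_scale a (cmat_scale b A) = cmat_scale (a * b) A"
  by (simp add: cmat_scale_def mult.assoc)

lemma cmat_scale_diff: "cmat_scale c (A - B) = cmat_scale c A - cmat_scale c B"
  by (simp add: cmat_scale_def vec_eq_iff right_diff_distrib)

lemma cmat_scale_sum: "cmat_scale c (sum f I) = (\<Sum>i\<in>I. cmat_scale c (f i))"
  by (simp add: cmat_scale_def vec_eq_iff sum_component sum_distrib_left)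

lemma matrix_mul_cmat_scale_left: "cmat_scale c A ** B = cmat_scale c (A ** B)"
  by (simp add: cmat_scale_def vec_eq_iff matrix_matrix_mult_def sum_distrib_left mult.assoc)

lemma matrix_mul_cmat_scale_right: "A ** cmat_scale c B = cmat_scale c (A ** B)"
  by (simp add: cmat_scale_def vec_eq_iff matrix_matrix_mult_def sum_distrib_left mult.left_commute)

lemma ket_bra_scale_left: "ket_bra (c *s x) y = cmat_scale c (ket_bra x y)"
  by (simp add: ket_bra_def cmat_scale_def vec_eq_iff mult.assoc)

lemma ket_bra_mult_left: "ket_bra (A *v x) y = A ** ket_bra x y"
  by (simp add: ket_bra_def vec_eq_iff matrix_vector_mult_def matrix_matrix_mult_def
      sum_distrib_right mult.assoc)

lemma ket_bra_conj_transpose_right: "ket_bra x (conj_transpose B *v y) = ket_bra x y ** B"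
  by (simp add: ket_bra_def conj_transpose_def vec_eq_iff matrix_vector_mult_def
      matrix_matrix_mult_def sum_distrib_left mult_ac)

lemma commutator_self: "commutator A A = 0"
  by (simp add: commutator_def)

lemma commutator_swap: "commutator A B = - commutator B A"
  by (simp add: commutator_def)

lemma commutator_cmat_scale:
  "commutator (cmat_scale a A) (cmat_scale b B) = cmat_scale (a * b) (commutator A B)"
  by (simp add: commutator_def matrix_mul_cmat_scale_left matrix_mul_cmat_scale_right
      cmat_scale_scale cmat_scale_diff mult.commute)

lemma commutator_similar:
  assumes "S ** T = mat 1"
  shows "commutator (T ** A ** S) (T ** B ** S) = T ** commutator A B ** S"
proof -
  have "T ** A ** S ** (T ** B ** S) = T ** (A ** B) ** S" for A B
    using assms by (metis matrix_mul_assoc matrix_mul_rid)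
  then show ?thesis
    by (simp add: commutator_def matrix_mul_diff_left matrix_mul_diff_right)
qed

definition pauli_x :: "complex^2^2" where
  "pauli_x = vector [vector [0, 1], vector [1, 0]]"

definition pauli_y :: "complex^2^2" where
  "pauli_y = vector [vector [0, -\<i>], vector [\<i>, 0]]"

definition pauli_z :: "complex^2^2" where
  "pauli_z = vector [vector [1, 0], vector [0, -1]]"

lemmas pauli_defs = pauli_x_def pauli_y_def pauli_z_def

lemma commutator_pauli:
  "commutator pauli_x pauli_y = cmat_scale (2 * \<i>) pauli_z"
  "commutator pauli_y pauli_z = cmat_scale (2 * \<i>) pauli_x"
  "commutator pauli_z pauli_x = cmat_scale (2 * \<i>) pauli_y"
  by (simp_all add: commutator_def pauli_defs cmat_scale_def vec_eq_iff forall_2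
      matrix_matrix_mult_def sum_2 mult.assoc)

definition coef_matrix :: "nat \<Rightarrow> complex^2^2" where
  "coef_matrix m =
     (\<Sum>j\<in>{1,2::nat}. \<Sum>k\<in>{1,2::nat}. cmat_scale (coef m j k) (ket_bra (u_vec j) (u_vec k)))"

lemma coef_matrix_pauli:
  "coef_matrix 1 = cmat_scale (-1) pauli_x"
  "coef_matrix 2 = cmat_scale \<i> pauli_y"
  "coef_matrix 3 = pauli_z"
proof -
  have "complex_of_real (sqrt 2) * complex_of_real (sqrt 2) = 2"
    by (simp flip: of_real_mult)
  then show "coef_matrix 1 = cmat_scale (-1) pauli_x" "coef_matrix 2 = cmat_scale \<i> pauli_y"
    "coef_matrix 3 = pauli_z"
    by (simp_all add: coef_matrix_def coef_def c1_def c2_def c3_def kdelta_def u_vec_def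
        ket_bra_def cmat_scale_def pauli_defs vec_eq_iff forall_2)
qed

lemma ket_bra_phi_chi:
  "ket_bra (phi_vec \<theta> j) (chi_vec \<theta> k) =
     cmat_scale (cos \<theta>) (T_mat \<theta> ** ket_bra (u_vec j) (u_vec k) ** matrix_inv (T_mat \<theta>))"
  by (simp add: phi_vec_def chi_vec_def ket_bra_scale_left ket_bra_mult_left
      ket_bra_conj_transpose_right matrix_mul_cmat_scale_left matrix_mul_assoc)

lemma sigma_gamma_similar:
  "sigma_gamma \<theta> m =
     cmat_scale (\<i> ^ (m + 1) / 2 * (cos \<theta> / cos \<theta> ^ (if m = 2 then 1 else 0)))
       (T_mat \<theta> ** coef_matrix m ** matrix_inv (T_mat \<theta>))"
  unfolding sigma_gamma_def coef_matrix_def ket_bra_phi_chi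
  by (simp only: cmat_scale_scale cmat_scale_sum matrix_mul_sum_left matrix_mul_sum_right
      matrix_mul_cmat_scale_left matrix_mul_cmat_scale_right) (simp add: ac_simps)

lemma det_T_mat: "det (T_mat \<theta>) = cos \<theta>"
proof -
  have "cos \<theta> = cos (2 * (\<theta>/2))"
    by simp
  also have "\<dots> = cos (\<theta>/2)^2 - sin (\<theta>/2)^2"
    by (rule cos_double)
  finally have "cos \<theta> = cos (\<theta>/2)^2 - sin (\<theta>/2)^2" .
  then show ?thesis
    by (simp add: det_2 T_mat_def sigma2_def cmat_scale_def mat_def power2_eq_square mult_ac)
qed

lemma invertible_T_mat: "cos \<theta> \<noteq> 0 \<Longrightarrow> invertible (T_mat \<theta>)"
  by (simp add: invertible_det_nz det_T_mat)

lemma sigma_gamma_pauli: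
  assumes "cos \<theta> \<noteq> 0"
  shows "sigma_gamma \<theta> 1 =
      cmat_scale (cos \<theta> / 2) (T_mat \<theta> ** pauli_x ** matrix_inv (T_mat \<theta>))"
    "sigma_gamma \<theta> 2 =
      cmat_scale (1 / 2) (T_mat \<theta> ** pauli_y ** matrix_inv (T_mat \<theta>))"
    "sigma_gamma \<theta> 3 =
      cmat_scale (cos \<theta> / 2) (T_mat \<theta> ** pauli_z ** matrix_inv (T_mat \<theta>))"
  unfolding sigma_gamma_similar coef_matrix_pauli using assms
  by (simp_all add: matrix_mul_cmat_scale_left matrix_mul_cmat_scale_right cmat_scale_scale
      eval_nat_numeral)

lemma commutator_sigma_gamma:
  assumes "cos \<theta> \<noteq> 0"
  shows "commutator (sigma_gamma \<theta> 1) (sigma_gamma \<theta> 2) = cmat_scale \<i> (sigma_gamma \<theta> 3)"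
    "commutator (sigma_gamma \<theta> 2) (sigma_gamma \<theta> 3) = cmat_scale \<i> (sigma_gamma \<theta> 1)"
    "commutator (sigma_gamma \<theta> 3) (sigma_gamma \<theta> 1) =
       cmat_scale (\<i> * (1 - (sin \<theta>)\<^sup>2)) (sigma_gamma \<theta> 2)"
proof -
  have inv: "matrix_inv (T_mat \<theta>) ** T_mat \<theta> = mat 1"
    using assms by (simp add: matrix_inv_left invertible_T_mat)
  have "complex_of_real (1 - (sin \<theta>)\<^sup>2) = (cos \<theta>)\<^sup>2"
    by (simp add: cos_squared_eq)
  then show "commutator (sigma_gamma \<theta> 1) (sigma_gamma \<theta> 2) = cmat_scale \<i> (sigma_gamma \<theta> 3)"
    "commutator (sigma_gamma \<theta> 2) (sigma_gamma \<theta> 3) = cmat_scale \<i> (sigma_gamma \<theta> 1)"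
    "commutator (sigma_gamma \<theta> 3) (sigma_gamma \<theta> 1) =
       cmat_scale (\<i> * (1 - (sin \<theta>)\<^sup>2)) (sigma_gamma \<theta> 2)"
    unfolding sigma_gamma_pauli[OF assms]
    by (simp_all add: commutator_cmat_scale commutator_similar[OF inv] commutator_pauli
        matrix_mul_cmat_scale_left matrix_mul_cmat_scale_right cmat_scale_scale power2_eq_square)
qed

lemma sum_123: "(\<Sum>n\<in>{1,2,3::nat}. f n) = f 1 + f 2 + f 3"
  by (simp add: add.assoc)

theorem mainTheorem2:
  fixes \<theta> :: real and l m :: nat
  assumes "cos \<theta> \<noteq> 0"
    and "l \<in> {1,2,3}" and "m \<in> {1,2,3}"
  shows "commutator (sigma_gamma \<theta> l) (sigma_gamma \<theta> m) =
    cmat_scale \<i> (\<Sum>n\<in>{1,2,3::nat}.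
      cmat_scale (levi_civita l m n * (1 - complex_of_real ((sin \<theta>)\<^sup>2) * kdelta n 2))
        (sigma_gamma \<theta> n))"
  \<comment> \<open>One_nat_def would turn the index 1 into Suc 0, which the lemmas above no longer match.\<close>
  using assms(2,3)
  by (auto simp del: One_nat_def simp add: sum_123 levi_civita_def kdelta_def commutator_self
      commutator_swap[of "sigma_gamma \<theta> 2" "sigma_gamma \<theta> 1"]
      commutator_swap[of "sigma_gamma \<theta> 3" "sigma_gamma \<theta> 2"]
      commutator_swap[of "sigma_gamma \<theta> 1" "sigma_gamma \<theta> 3"]
      commutator_sigma_gamma[OF assms(1)] cmat_scale_zero cmat_scale_uminus
      cmat_scale_scale right_diff_distrib)

end
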